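(* Let $(P,A,\lambda)$ be a marked poset, $(U_1,U_2)$ an admissible decomposition, $A_1=A\cup U_1$, and let $\pi_1:\mathbb{R}^{P\setminus A}\to\mathbb{R}^{U_1}$, $\pi_2:\mathbb{R}^{P\setminus A}\to\mathbb{R}^{U_2}$ be the coordinate projections. For a point $s$, let $\lambda^s:A_1\to\mathbb{R}$ be given by $\lambda^s(p)=\lambda_p$ for $p\in A$ and $\lambda^s(p)=s_p$ for $p\in U_1$. Then: (1) for $s\in\mathcal{O}_{P,A}(\lambda)$, $\{\pi_2(y): y\in\mathcal{O}_{P,A}(\lambda),\ \pi_1(y)=\pi_1(s)\}=\mathcal{O}_{P,A_1}(\lambda^s)$; (2) for $s\in\mathcal{CO}_{U_1,U_2}(\lambda)$, $\{\pi_2(y): y\in\mathcal{CO}_{U_1,U_2}(\lambda),\ \pi_1(y)=\pi_1(s)\}=\mathcal{C}_{P,A_1}(\lambda^s)$.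
   Context: A marked poset is a triple $(P,A,\lambda)$ where $(P,\prec)$ is a finite poset, $A\subseteq P$ contains all minimal and all maximal elements of $P$, and $\lambda:A\to\mathbb{Z}_{\ge 0}$, $a\mapsto\lambda_a$. A decomposition of $(P,A,\lambda)$ is a pair $(U_1,U_2)$ of disjoint sets with $U_1\cup U_2=P\setminus A$; it is admissible if there are no $u_1\in U_1$, $u_2\in U_2$ with $u_1\prec u_2$. For any such $(P,A)$, real-valued $\lambda$ on $A$, and decomposition $(U_1,U_2)$ of $P\setminus A$, the marked chain-order polytope $\mathcal{CO}_{U_1,U_2}(\lambda)\subset\mathbb{R}^{P\setminus A}$ is the set of $(x_p)_{p\in P\setminus A}$ such that: (i) $x_p\le\lambda_a$ whenever $p\in U_1$, $a\in A$, $p\prec a$; (ii) $\lambda_b\le x_q$ whenever $q\in U_1$, $b\in A$, $b\prec q$; (iii) $x_p\le x_q$ whenever $p,q\in U_1$, $p\prec q$; (iv) $x_p\ge0$ for $p\in U_2$; (v) for every chain $b\prec p_n\prec\cdots\prec p_1\prec a$ with $n\ge1$, $a,b\in A\cup U_1$, $p_i\in U_2$: $x_{p_1}+\cdots+x_{p_n}\le\lambda_a-\lambda_b$, where $\lambda_q$ means $x_q$ for $q\in U_1$; (vi) for every chain $p_1\prec\cdots\prec p_s\prec q$ with $q\in U_1$, $p_i\in U_2$: $x_{p_1}+\cdots+x_{p_s}\le x_q$. The marked order polytope is $\mathcal{O}_{P,A}(\lambda)=\mathcal{CO}_{P\setminus A,\emptyset}(\lambda)$ and the marked chain polytope is $\mathcal{C}_{P,A}(\lambda)=\mathcal{CO}_{\emptyset,P\setminus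 A}(\lambda)$. Accordingly $\mathcal{O}_{P,A_1}(\lambda^s)$ and $\mathcal{C}_{P,A_1}(\lambda^s)$ are the marked order and marked chain polytopes of $P$ with marked set $A_1$ and marking $\lambda^s$; they lie in $\mathbb{R}^{P\setminus A_1}=\mathbb{R}^{U_2}$. *)

theory Defs
  imports Complex_Main "HOL-Library.FuncSet"
begin

text \<open>Points of R^(P - A) are functions 'a => real that are extensional on P - A
  (i.e. take the value undefined outside P - A).\<close>

definition marked_poset :: "'a set \<Rightarrow> ('a \<Rightarrow> 'a \<Rightarrow> bool) \<Rightarrow> 'a set \<Rightarrow> ('a \<Rightarrow> real) \<Rightarrow> bool" where
  "marked_poset P prec A lam \<longleftrightarrow>
     finite P
   \<and> (\<forall>p\<in>P. \<not> prec p p)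
   \<and> (\<forall>p\<in>P. \<forall>q\<in>P. \<forall>r\<in>P. prec p q \<and> prec q r \<longrightarrow> prec p r)
   \<and> A \<subseteq> P
   \<and> (\<forall>p\<in>P. (\<not> (\<exists>q\<in>P. prec q p)) \<longrightarrow> p \<in> A)
   \<and> (\<forall>p\<in>P. (\<not> (\<exists>q\<in>P. prec p q)) \<longrightarrow> p \<in> A)
   \<and> (\<forall>a\<in>A. lam a \<in> \<nat>)"

definition admissible_decomp :: "'a set \<Rightarrow> ('a \<Rightarrow> 'a \<Rightarrow> bool) \<Rightarrow> 'a set \<Rightarrow> 'a set \<Rightarrow> 'a set \<Rightarrow> bool" where
  "admissible_decomp P prec A U1 U2 \<longleftrightarrow>
     U1 \<inter> U2 = {} \<and> U1 \<union> U2 = P - A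
   \<and> \<not> (\<exists>u1\<in>U1. \<exists>u2\<in>U2. prec u1 u2)"

text \<open>Marked chain-order polytope CO_{U1,U2}(lam).  A chain b < p_n < ... < p_1 < a
  is encoded as a list ps (listed increasingly) with sorted_wrt prec (b # ps @ [a]).\<close>

definition chain_order_polytope ::
  "'a set \<Rightarrow> ('a \<Rightarrow> 'a \<Rightarrow> bool) \<Rightarrow> 'a set \<Rightarrow> ('a \<Rightarrow> real) \<Rightarrow> 'a set \<Rightarrow> 'a set \<Rightarrow> ('a \<Rightarrow> real) set" where
  "chain_order_polytope P prec A lam U1 U2 =
    {x \<in> extensional (P - A).
       (\<forall>p\<in>U1. \<forall>a\<in>A. prec p a \<longrightarrow> x p \<le> lam a)
     \<and> (\<forall>q\<in>U1. \<forall>b\<in>A. prec b q \<longrightarrow> lam b \<le> x q)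
     \<and> (\<forall>p\<in>U1. \<forall>q\<in>U1. prec p q \<longrightarrow> x p \<le> x q)
     \<and> (\<forall>p\<in>U2. 0 \<le> x p)
     \<and> (\<forall>a\<in>A \<union> U1. \<forall>b\<in>A \<union> U1. \<forall>ps. ps \<noteq> [] \<and> set ps \<subseteq> U2
            \<and> sorted_wrt prec (b # ps @ [a]) \<longrightarrow>
            sum_list (map x ps) \<le> (if a \<in> U1 then x a else lam a) - (if b \<in> U1 then x b else lam b))
     \<and> (\<forall>q\<in>U1. \<forall>ps. ps \<noteq> [] \<and> set ps \<subseteq> U2 \<and> sorted_wrt prec (ps @ [q]) \<longrightarrow>
            sum_list (map x ps) \<le> x q)}"

definition marked_order_polytope ::
  "'a set \<Rightarrow> ('a \<Rightarrow> 'a \<Rightarrow> bool) \<Rightarrow> 'a set \<Rightarrow> ('a \<Rightarrow> real) \<Rightarrow> ('a \<Rightarrow> real) set" where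
  "marked_order_polytope P prec A lam = chain_order_polytope P prec A lam (P - A) {}"

definition marked_chain_polytope ::
  "'a set \<Rightarrow> ('a \<Rightarrow> 'a \<Rightarrow> bool) \<Rightarrow> 'a set \<Rightarrow> ('a \<Rightarrow> real) \<Rightarrow> ('a \<Rightarrow> real) set" where
  "marked_chain_polytope P prec A lam = chain_order_polytope P prec A lam {} (P - A)"

definition marking_s :: "'a set \<Rightarrow> ('a \<Rightarrow> real) \<Rightarrow> ('a \<Rightarrow> real) \<Rightarrow> 'a \<Rightarrow> real" where
  "marking_s U1 lam s = (\<lambda>p. if p \<in> U1 then s p else lam p)"

end

theory Submission
  imports Defs
begin

text \<open>Fixing the \<open>U\<^sub>1\<close>-coordinates of a point of \<open>\<O>\<^sub>P\<^sub>,\<^sub>A(\<lambda>)\<close> (resp. \<open>\<C>\<O>\<^sub>U\<^sub>1\<^sub>,\<^sub>U\<^sub>2(\<lambda>)\<close>) to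
  those of \<open>s\<close> turns every inequality involving a \<open>U\<^sub>1\<close>-coordinate into an inequality between a
  \<open>U\<^sub>2\<close>-coordinate and a marking value of \<open>\<lambda>\<^sup>s\<close>, so the fiber is cut out by the inequalities of
  the polytope with marked set \<open>A \<union> U\<^sub>1\<close>; conversely any point of that polytope glued with
  \<open>\<pi>\<^sub>1(s)\<close> lies in the original one. In the chain case the only inequality without a
  counterpart is (vi), for a chain of \<open>U\<^sub>2\<close>-elements below \<open>q \<in> U\<^sub>1\<close>: prolonging the chain
  downwards by a marked element \<open>b \<in> A\<close> (which exists since minimal elements are marked) yields
  an inequality of type (v), and \<open>\<lambda>\<^sub>b \<ge> 0\<close> makes it at least as strong as (vi).\<close>

definition glue_on :: "'a set \<Rightarrow> 'a set \<Rightarrow> ('a \<Rightarrow> real) \<Rightarrow> ('a \<Rightarrow> real) \<Rightarrow> 'a \<Rightarrow> real" where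
  "glue_on Q U s z = restrict (\<lambda>p. if p \<in> U then s p else z p) Q"

lemma image_restrict_fiber_eq:
  assumes cover: "U1 \<union> U2 = Q" and disj: "U1 \<inter> U2 = {}"
    and T_ext: "T \<subseteq> extensional U2"
    and fwd: "\<And>y. y \<in> X \<Longrightarrow> (\<And>p. p \<in> U1 \<Longrightarrow> y p = s p) \<Longrightarrow> restrict y U2 \<in> T"
    and bwd: "\<And>z. z \<in> T \<Longrightarrow> glue_on Q U1 s z \<in> X"
  shows "(\<lambda>y. restrict y U2) ` {y \<in> X. restrict y U1 = restrict s U1} = T"
proof (intro equalityI subsetI)
  fix z assume "z \<in> (\<lambda>y. restrict y U2) ` {y \<in> X. restrict y U1 = restrict s U1}"
  then obtain y where y: "y \<in> X" "restrict y U1 = restrict s U1" and z: "z = restrict y U2"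
    by blast
  have "y p = s p" if "p \<in> U1" for p
    using fun_cong[OF y(2), of p] that by simp
  then show "z \<in> T"
    unfolding z by (rule fwd[OF y(1)])
next
  fix z assume "z \<in> T"
  then have z_ext: "z \<in> extensional U2"
    using T_ext by blast
  define y where "y = glue_on Q U1 s z"
  have "y \<in> X"
    using bwd \<open>z \<in> T\<close> by (simp add: y_def)
  moreover have "restrict y U1 = restrict s U1"
    using cover by (intro restrict_ext) (auto simp: y_def glue_on_def dest: equalityD1)
  ultimately have y_fiber: "y \<in> {y \<in> X. restrict y U1 = restrict s U1}"
    by simp
  have "z = restrict y U2"
  proof
    fix p
    show "z p = restrict y U2 p"
    proof (cases "p \<in> U2")
      case True
      moreover from True have "p \<in> Q" "p \<notin> U1"
        using disj cover by blast+
      ultimately show ?thesis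
        by (simp add: y_def glue_on_def)
    next
      case False
      then show ?thesis
        by (simp add: extensional_arb[OF z_ext])
    qed
  qed
  with y_fiber show "z \<in> (\<lambda>y. restrict y U2) ` {y \<in> X. restrict y U1 = restrict s U1}"
    by (rule rev_image_eqI[where f = "\<lambda>y. restrict y U2"])
qed

lemma chain_order_polytope_subset_extensional:
  "chain_order_polytope P prec A lam U1 U2 \<subseteq> extensional (P - A)"
  by (auto simp: chain_order_polytope_def)

lemma marked_order_polytope_iff:
  "x \<in> marked_order_polytope P prec A lam \<longleftrightarrow>
     x \<in> extensional (P - A)
   \<and> (\<forall>p\<in>P - A. \<forall>a\<in>A. prec p a \<longrightarrow> x p \<le> lam a)
   \<and> (\<forall>q\<in>P - A. \<forall>b\<in>A. prec b q \<longrightarrow> lam b \<le> x q)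
   \<and> (\<forall>p\<in>P - A. \<forall>q\<in>P - A. prec p q \<longrightarrow> x p \<le> x q)"
  by (simp add: marked_order_polytope_def chain_order_polytope_def)

lemma marked_chain_polytope_iff:
  "x \<in> marked_chain_polytope P prec A lam \<longleftrightarrow>
     x \<in> extensional (P - A)
   \<and> (\<forall>p\<in>P - A. 0 \<le> x p)
   \<and> (\<forall>a\<in>A. \<forall>b\<in>A. \<forall>ps. ps \<noteq> [] \<and> set ps \<subseteq> P - A \<and> sorted_wrt prec (b # ps @ [a]) \<longrightarrow>
        sum_list (map x ps) \<le> lam a - lam b)"
  by (simp add: marked_chain_polytope_def chain_order_polytope_def)

lemma marking_s_on_A:
  "a \<in> A \<Longrightarrow> U1 \<subseteq> P - A \<Longrightarrow> marking_s U1 lam s a = lam a"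
  by (auto simp: marking_s_def)

lemma marking_s_on_U1 [simp]: "a \<in> U1 \<Longrightarrow> marking_s U1 lam s a = s a"
  by (simp add: marking_s_def)

lemma order_polytope_fiber_in_order_polytope:
  assumes cover: "U1 \<union> U2 = P - A" "U1 \<inter> U2 = {}"
    and y: "y \<in> marked_order_polytope P prec A lam"
    and y_s: "\<And>p. p \<in> U1 \<Longrightarrow> y p = s p"
  shows "restrict y U2 \<in> marked_order_polytope P prec (A \<union> U1) (marking_s U1 lam s)"
proof -
  have U2: "P - (A \<union> U1) = U2" and U1: "U1 \<subseteq> P - A" and U2_sub: "U2 \<subseteq> P - A"
    using cover by blast+
  note marking_s_on_A[OF _ U1, simp]
  have le_lam: "\<And>p a. p \<in> P - A \<Longrightarrow> a \<in> A \<Longrightarrow> prec p a \<Longrightarrow> y p \<le> lam a"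
    and lam_le: "\<And>q b. q \<in> P - A \<Longrightarrow> b \<in> A \<Longrightarrow> prec b q \<Longrightarrow> lam b \<le> y q"
    and mono: "\<And>p q. p \<in> P - A \<Longrightarrow> q \<in> P - A \<Longrightarrow> prec p q \<Longrightarrow> y p \<le> y q"
    using y by (simp_all add: marked_order_polytope_iff)
  show ?thesis
    unfolding marked_order_polytope_iff U2
  proof (intro conjI ballI impI)
    fix p a assume "p \<in> U2" and a: "a \<in> A \<union> U1" and pa: "prec p a"
    then have p: "p \<in> P - A"
      using U2_sub by blast
    from a have "y p \<le> marking_s U1 lam s a"
    proof
      assume "a \<in> A" then show ?thesis using le_lam[OF p _ pa] by simp
    next
      assume "a \<in> U1"
      then show ?thesis using mono[OF p subsetD[OF U1] pa] y_s[of a] by simp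
    qed
    with \<open>p \<in> U2\<close> show "restrict y U2 p \<le> marking_s U1 lam s a"
      by simp
  next
    fix q b assume "q \<in> U2" and b: "b \<in> A \<union> U1" and bq: "prec b q"
    then have q: "q \<in> P - A"
      using U2_sub by blast
    from b have "marking_s U1 lam s b \<le> y q"
    proof
      assume "b \<in> A" then show ?thesis using lam_le[OF q _ bq] by simp
    next
      assume "b \<in> U1"
      then show ?thesis using mono[OF subsetD[OF U1] q bq] y_s[of b] by simp
    qed
    with \<open>q \<in> U2\<close> show "marking_s U1 lam s b \<le> restrict y U2 q"
      by simp
  next
    fix p q assume "p \<in> U2" "q \<in> U2" "prec p q"
    then show "restrict y U2 p \<le> restrict y U2 q"
      using mono U2_sub by (simp add: subset_iff)
  qed simp
qed

lemma order_polytope_glue: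
  assumes cover: "U1 \<union> U2 = P - A" "U1 \<inter> U2 = {}"
    and s: "s \<in> marked_order_polytope P prec A lam"
    and z: "z \<in> marked_order_polytope P prec (A \<union> U1) (marking_s U1 lam s)"
  shows "glue_on (P - A) U1 s z \<in> marked_order_polytope P prec A lam"
proof -
  define y where "y = glue_on (P - A) U1 s z"
  have U2: "P - (A \<union> U1) = U2" and U1: "U1 \<subseteq> P - A"
    and split: "\<And>p. p \<in> P - A \<Longrightarrow> p \<in> U1 \<or> p \<in> U2"
    using cover by blast+
  note marking_s_on_A[OF _ U1, simp]
  have y_U1: "y p = s p" if "p \<in> U1" for p
    using that U1 by (auto simp: y_def glue_on_def)
  have y_U2: "y p = z p" if "p \<in> U2" for p
    using that cover by (auto simp: y_def glue_on_def)
  have s_le: "\<And>p a. p \<in> P - A \<Longrightarrow> a \<in> A \<Longrightarrow> prec p a \<Longrightarrow> s p \<le> lam a"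
    and le_s: "\<And>q b. q \<in> P - A \<Longrightarrow> b \<in> A \<Longrightarrow> prec b q \<Longrightarrow> lam b \<le> s q"
    and s_mono: "\<And>p q. p \<in> P - A \<Longrightarrow> q \<in> P - A \<Longrightarrow> prec p q \<Longrightarrow> s p \<le> s q"
    using s by (simp_all add: marked_order_polytope_iff)
  have z_le: "\<And>p a. p \<in> U2 \<Longrightarrow> a \<in> A \<union> U1 \<Longrightarrow> prec p a \<Longrightarrow> z p \<le> marking_s U1 lam s a"
    and le_z: "\<And>q b. q \<in> U2 \<Longrightarrow> b \<in> A \<union> U1 \<Longrightarrow> prec b q \<Longrightarrow> marking_s U1 lam s b \<le> z q"
    and z_mono: "\<And>p q. p \<in> U2 \<Longrightarrow> q \<in> U2 \<Longrightarrow> prec p q \<Longrightarrow> z p \<le> z q"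
    using z by (simp_all add: marked_order_polytope_iff U2)
  have "y \<in> marked_order_polytope P prec A lam"
    unfolding marked_order_polytope_iff
  proof (intro conjI ballI impI)
    show "y \<in> extensional (P - A)"
      by (simp add: y_def glue_on_def)
  next
    fix p a assume p: "p \<in> P - A" and a: "a \<in> A" "prec p a"
    from split[OF p] show "y p \<le> lam a"
    proof
      assume "p \<in> U1" then show ?thesis using s_le[OF p a] y_U1 by simp
    next
      assume "p \<in> U2" then show ?thesis using z_le[of p a] a y_U2 by simp
    qed
  next
    fix q b assume q: "q \<in> P - A" and b: "b \<in> A" "prec b q"
    from split[OF q] show "lam b \<le> y q"
    proof
      assume "q \<in> U1" then show ?thesis using le_s[OF q b] y_U1 by simp
    next
      assume "q \<in> U2" then show ?thesis using le_z[of q b] b y_U2 by simp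
    qed
  next
    fix p q assume p: "p \<in> P - A" and q: "q \<in> P - A" and pq: "prec p q"
    from split[OF p] split[OF q]
    consider "p \<in> U1" "q \<in> U1" | "p \<in> U1" "q \<in> U2" | "p \<in> U2" "q \<in> U1" | "p \<in> U2" "q \<in> U2"
      by blast
    then show "y p \<le> y q"
    proof cases
      case 1 then show ?thesis using s_mono[OF p q pq] y_U1 by simp
    next
      case 2 then show ?thesis using le_z[of q p] pq y_U1 y_U2 by simp
    next
      case 3 then show ?thesis using z_le[of p q] pq y_U1 y_U2 by simp
    next
      case 4 then show ?thesis using z_mono[of p q] pq y_U2 by simp
    qed
  qed
  then show ?thesis
    by (simp add: y_def)
qed

lemma finite_strict_order_minimal_below:
  assumes "finite P" and irrefl: "\<forall>p\<in>P. \<not> prec p p"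
    and trans: "\<forall>p\<in>P. \<forall>q\<in>P. \<forall>r\<in>P. prec p q \<and> prec q r \<longrightarrow> prec p r"
    and "p \<in> P"
  shows "\<exists>b\<in>P. (b = p \<or> prec b p) \<and> \<not> (\<exists>q\<in>P. prec q b)"
  using \<open>p \<in> P\<close>
proof (induction "card {q\<in>P. prec q p}" arbitrary: p rule: less_induct)
  case less
  show ?case
  proof (cases "\<exists>q\<in>P. prec q p")
    case False
    then show ?thesis
      using less.prems by blast
  next
    case True
    then obtain q where q: "q \<in> P" "prec q p"
      by blast
    have "{r\<in>P. prec r q} \<subset> {r\<in>P. prec r p}"
      using q trans irrefl less.prems by blast
    then have "card {r\<in>P. prec r q} < card {r\<in>P. prec r p}"
      using \<open>finite P\<close> by (simp add: psubset_card_mono)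
    from less.hyps[OF this q(1)] obtain b
      where "b \<in> P" "b = q \<or> prec b q" "\<not> (\<exists>q\<in>P. prec q b)"
      by blast
    then show ?thesis
      using q trans less.prems by blast
  qed
qed

lemma marked_posetD:
  assumes "marked_poset P prec A lam"
  shows "finite P" and "\<forall>p\<in>P. \<not> prec p p"
    and "\<forall>p\<in>P. \<forall>q\<in>P. \<forall>r\<in>P. prec p q \<and> prec q r \<longrightarrow> prec p r"
    and "A \<subseteq> P" and "\<forall>p\<in>P. \<not> (\<exists>q\<in>P. prec q p) \<longrightarrow> p \<in> A"
    and "\<forall>a\<in>A. lam a \<in> \<nat>"
  using assms unfolding marked_poset_def by blast+

lemma marked_poset_marked_below:
  assumes "marked_poset P prec A lam" and p: "p \<in> P - A"
  shows "\<exists>b\<in>A. prec b p"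
proof -
  note poset = marked_posetD[OF assms(1)]
  from p have "p \<in> P"
    by simp
  from finite_strict_order_minimal_below[OF poset(1-3) this]
  obtain b where b: "b \<in> P" "b = p \<or> prec b p" "\<not> (\<exists>q\<in>P. prec q b)"
    by blast
  from b(1,3) poset(5) have "b \<in> A"
    by blast
  with p b(2) show ?thesis
    by blast
qed

lemma marked_poset_marking_nonneg:
  assumes "marked_poset P prec A lam" and "a \<in> A"
  shows "0 \<le> lam a"
proof -
  have "lam a \<in> \<nat>"
    using marked_posetD(6)[OF assms(1)] assms(2) by blast
  then show ?thesis
    by (rule Nats_cases) simp
qed

lemma sorted_wrt_Cons_below:
  assumes trans: "\<forall>p\<in>P. \<forall>q\<in>P. \<forall>r\<in>P. prec p q \<and> prec q r \<longrightarrow> prec p r"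
    and "set (p # xs) \<subseteq> P" "b \<in> P" "prec b p" "sorted_wrt prec (p # xs)"
  shows "sorted_wrt prec (b # p # xs)"
proof -
  have "prec b x" if "x \<in> set xs" for x
  proof -
    have "prec p x" "x \<in> P" "p \<in> P"
      using assms(2,5) that by auto
    then show ?thesis
      using trans assms(3,4) by blast
  qed
  then show ?thesis
    using assms(4,5) by simp
qed

lemma marked_chain_polytope_sum_le_marking:
  assumes x: "x \<in> marked_chain_polytope P prec A lam"
    and trans: "\<forall>p\<in>P. \<forall>q\<in>P. \<forall>r\<in>P. prec p q \<and> prec q r \<longrightarrow> prec p r"
    and marked_below: "\<And>p. p \<in> P - A \<Longrightarrow> \<exists>b\<in>A. prec b p \<and> 0 \<le> lam b"
    and "A \<subseteq> P" "a \<in> A" "ps \<noteq> []" "set ps \<subseteq> P - A" "sorted_wrt prec (ps @ [a])"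
  shows "sum_list (map x ps) \<le> lam a"
proof -
  obtain p xs where ps: "ps = p # xs"
    using \<open>ps \<noteq> []\<close> by (cases ps) auto
  then have "p \<in> P - A"
    using \<open>set ps \<subseteq> P - A\<close> by simp
  then obtain b where b: "b \<in> A" "prec b p" "0 \<le> lam b"
    using marked_below by blast
  have "sorted_wrt prec (b # p # xs @ [a])"
    using \<open>A \<subseteq> P\<close> \<open>a \<in> A\<close> \<open>set ps \<subseteq> P - A\<close> b \<open>sorted_wrt prec (ps @ [a])\<close> ps
    by (intro sorted_wrt_Cons_below[OF trans]) auto
  then have "sorted_wrt prec (b # ps @ [a])"
    using ps by simp
  moreover have "\<forall>a\<in>A. \<forall>b\<in>A. \<forall>ps. ps \<noteq> [] \<and> set ps \<subseteq> P - A \<and> sorted_wrt prec (b # ps @ [a])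
      \<longrightarrow> sum_list (map x ps) \<le> lam a - lam b"
    using x unfolding marked_chain_polytope_iff by blast
  ultimately have "sum_list (map x ps) \<le> lam a - lam b"
    using \<open>a \<in> A\<close> b(1) \<open>ps \<noteq> []\<close> \<open>set ps \<subseteq> P - A\<close> by blast
  with b(3) show ?thesis
    by linarith
qed

lemma chain_order_polytope_fiber_in_chain_polytope:
  assumes cover: "U1 \<union> U2 = P - A" "U1 \<inter> U2 = {}"
    and y: "y \<in> chain_order_polytope P prec A lam U1 U2"
    and y_s: "\<And>p. p \<in> U1 \<Longrightarrow> y p = s p"
  shows "restrict y U2 \<in> marked_chain_polytope P prec (A \<union> U1) (marking_s U1 lam s)"
proof -
  have U2: "P - (A \<union> U1) = U2"
    using cover by blast
  have y_marking: "(if a \<in> U1 then y a else lam a) = marking_s U1 lam s a" for a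
    by (simp add: marking_s_def y_s)
  have nonneg: "\<forall>p\<in>U2. 0 \<le> y p"
    and chain: "\<forall>a\<in>A \<union> U1. \<forall>b\<in>A \<union> U1. \<forall>ps. ps \<noteq> [] \<and> set ps \<subseteq> U2
        \<and> sorted_wrt prec (b # ps @ [a]) \<longrightarrow>
        sum_list (map y ps) \<le> (if a \<in> U1 then y a else lam a) - (if b \<in> U1 then y b else lam b)"
    using y by (simp_all add: chain_order_polytope_def)
  show ?thesis
    unfolding marked_chain_polytope_iff U2
  proof (intro conjI ballI allI impI)
    show "restrict y U2 \<in> extensional U2"
      by simp
  next
    fix p assume "p \<in> U2"
    then show "0 \<le> restrict y U2 p"
      using nonneg by simp
  next
    fix a b ps
    assume "a \<in> A \<union> U1" "b \<in> A \<union> U1"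
      and ps: "ps \<noteq> [] \<and> set ps \<subseteq> U2 \<and> sorted_wrt prec (b # ps @ [a])"
    then have "sum_list (map y ps) \<le> marking_s U1 lam s a - marking_s U1 lam s b"
      using chain unfolding y_marking by blast
    moreover have "map (restrict y U2) ps = map y ps"
      using ps by (intro map_cong) auto
    ultimately show "sum_list (map (restrict y U2) ps) \<le> marking_s U1 lam s a - marking_s U1 lam s b"
      by (simp only:)
  qed
qed

lemma marked_chain_polytope_sum_le_marking_s:
  assumes poset: "marked_poset P prec A lam" and U1: "U1 \<subseteq> P - A"
    and z: "z \<in> marked_chain_polytope P prec (A \<union> U1) (marking_s U1 lam s)"
    and q: "q \<in> U1"
    and ps: "ps \<noteq> []" "set ps \<subseteq> P - (A \<union> U1)" "sorted_wrt prec (ps @ [q])"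
  shows "sum_list (map z ps) \<le> s q"
proof -
  have marked_below: "\<exists>b\<in>A \<union> U1. prec b p \<and> 0 \<le> marking_s U1 lam s b"
    if p: "p \<in> P - (A \<union> U1)" for p
  proof -
    from p have "p \<in> P - A"
      by blast
    then obtain b where b: "b \<in> A" "prec b p"
      using marked_poset_marked_below[OF poset] by blast
    then have "b \<notin> U1"
      using U1 by blast
    with b(1) have "marking_s U1 lam s b = lam b"
      by (simp add: marking_s_def)
    with b marked_poset_marking_nonneg[OF poset b(1)] show ?thesis
      by (intro bexI[of _ b]) simp_all
  qed
  have "A \<union> U1 \<subseteq> P"
    using marked_posetD(4)[OF poset] U1 by blast
  from marked_chain_polytope_sum_le_marking[OF z marked_posetD(3)[OF poset] marked_below
      this UnI2[OF q] ps]
  show ?thesis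
    using q by simp
qed

lemma chain_order_polytope_glue:
  assumes poset: "marked_poset P prec A lam"
    and cover: "U1 \<union> U2 = P - A" "U1 \<inter> U2 = {}"
    and s: "s \<in> chain_order_polytope P prec A lam U1 U2"
    and z: "z \<in> marked_chain_polytope P prec (A \<union> U1) (marking_s U1 lam s)"
  shows "glue_on (P - A) U1 s z \<in> chain_order_polytope P prec A lam U1 U2"
proof -
  define y where "y = glue_on (P - A) U1 s z"
  have U2: "P - (A \<union> U1) = U2" and U1: "U1 \<subseteq> P - A"
    using cover by blast+
  have y_U1: "y p = s p" if "p \<in> U1" for p
    using that U1 by (auto simp: y_def glue_on_def)
  have y_U2: "y p = z p" if "p \<in> U2" for p
    using that cover by (auto simp: y_def glue_on_def)
  have map_y: "map y ps = map z ps" if "set ps \<subseteq> U2" for ps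
    using that y_U2 by (intro map_cong) auto
  have y_marking: "(if a \<in> U1 then y a else lam a) = marking_s U1 lam s a" for a
    by (simp add: marking_s_def y_U1)
  from s have s_le: "\<forall>p\<in>U1. \<forall>a\<in>A. prec p a \<longrightarrow> s p \<le> lam a"
    and le_s: "\<forall>q\<in>U1. \<forall>b\<in>A. prec b q \<longrightarrow> lam b \<le> s q"
    and s_mono: "\<forall>p\<in>U1. \<forall>q\<in>U1. prec p q \<longrightarrow> s p \<le> s q"
    by (simp_all add: chain_order_polytope_def)
  from z have z_nonneg: "\<forall>p\<in>U2. 0 \<le> z p"
    and z_chain: "\<forall>a\<in>A \<union> U1. \<forall>b\<in>A \<union> U1. \<forall>ps. ps \<noteq> [] \<and> set ps \<subseteq> U2
        \<and> sorted_wrt prec (b # ps @ [a]) \<longrightarrow>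
        sum_list (map z ps) \<le> marking_s U1 lam s a - marking_s U1 lam s b"
    by (simp_all add: marked_chain_polytope_iff U2)
  have z_chain_top: "sum_list (map z ps) \<le> s q"
    if "q \<in> U1" "ps \<noteq> []" "set ps \<subseteq> U2" "sorted_wrt prec (ps @ [q])" for q ps
    using marked_chain_polytope_sum_le_marking_s[OF poset U1 z] that by (simp only: U2)
  have "y \<in> chain_order_polytope P prec A lam U1 U2"
    unfolding chain_order_polytope_def
  proof (intro CollectI conjI)
    show "y \<in> extensional (P - A)"
      by (simp add: y_def glue_on_def)
    show "\<forall>p\<in>U1. \<forall>a\<in>A. prec p a \<longrightarrow> y p \<le> lam a"
      using s_le y_U1 by simp
    show "\<forall>q\<in>U1. \<forall>b\<in>A. prec b q \<longrightarrow> lam b \<le> y q"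
      using le_s y_U1 by simp
    show "\<forall>p\<in>U1. \<forall>q\<in>U1. prec p q \<longrightarrow> y p \<le> y q"
      using s_mono y_U1 by simp
    show "\<forall>p\<in>U2. 0 \<le> y p"
      using z_nonneg y_U2 by simp
    show "\<forall>a\<in>A \<union> U1. \<forall>b\<in>A \<union> U1. \<forall>ps. ps \<noteq> [] \<and> set ps \<subseteq> U2
        \<and> sorted_wrt prec (b # ps @ [a]) \<longrightarrow>
        sum_list (map y ps) \<le> (if a \<in> U1 then y a else lam a) - (if b \<in> U1 then y b else lam b)"
    proof (intro ballI allI impI)
      fix a b ps
      assume "a \<in> A \<union> U1" "b \<in> A \<union> U1"
        and ps: "ps \<noteq> [] \<and> set ps \<subseteq> U2 \<and> sorted_wrt prec (b # ps @ [a])"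
      then have "sum_list (map z ps) \<le> marking_s U1 lam s a - marking_s U1 lam s b"
        using z_chain by blast
      moreover have "map y ps = map z ps"
        using ps map_y by blast
      ultimately show "sum_list (map y ps)
          \<le> (if a \<in> U1 then y a else lam a) - (if b \<in> U1 then y b else lam b)"
        unfolding y_marking by (simp only:)
    qed
    show "\<forall>q\<in>U1. \<forall>ps. ps \<noteq> [] \<and> set ps \<subseteq> U2 \<and> sorted_wrt prec (ps @ [q]) \<longrightarrow>
        sum_list (map y ps) \<le> y q"
    proof (intro ballI allI impI)
      fix q ps
      assume q: "q \<in> U1" and ps: "ps \<noteq> [] \<and> set ps \<subseteq> U2 \<and> sorted_wrt prec (ps @ [q])"
      then have "sum_list (map z ps) \<le> s q"
        using z_chain_top by blast
      moreover have "map y ps = map z ps"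
        using ps map_y by blast
      ultimately show "sum_list (map y ps) \<le> y q"
        using y_U1[OF q] by (simp only:)
    qed
  qed
  then show ?thesis
    by (simp add: y_def)
qed

theorem lemma1p15:
  fixes P A U1 U2 :: "'a set" and prec :: "'a \<Rightarrow> 'a \<Rightarrow> bool" and lam :: "'a \<Rightarrow> real"
  assumes "marked_poset P prec A lam"
    and "admissible_decomp P prec A U1 U2"
  shows "(\<forall>s \<in> marked_order_polytope P prec A lam.
            (\<lambda>y. restrict y U2) ` {y \<in> marked_order_polytope P prec A lam. restrict y U1 = restrict s U1}
            = marked_order_polytope P prec (A \<union> U1) (marking_s U1 lam s))
       \<and> (\<forall>s \<in> chain_order_polytope P prec A lam U1 U2.
            (\<lambda>y. restrict y U2) ` {y \<in> chain_order_polytope P prec A lam U1 U2. restrict y U1 = restrict s U1}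
            = marked_chain_polytope P prec (A \<union> U1) (marking_s U1 lam s))"
proof -
  from assms(2) have cover: "U1 \<union> U2 = P - A" "U1 \<inter> U2 = {}"
    unfolding admissible_decomp_def by blast+
  then have U2: "P - (A \<union> U1) = U2"
    by blast
  have order_ext: "marked_order_polytope P prec (A \<union> U1) lam' \<subseteq> extensional U2" for lam'
    using chain_order_polytope_subset_extensional[of P prec "A \<union> U1"]
    unfolding marked_order_polytope_def U2 .
  have chain_ext: "marked_chain_polytope P prec (A \<union> U1) lam' \<subseteq> extensional U2" for lam'
    using chain_order_polytope_subset_extensional[of P prec "A \<union> U1"]
    unfolding marked_chain_polytope_def U2 .
  show ?thesis
  proof (intro conjI ballI)
    fix s assume "s \<in> marked_order_polytope P prec A lam"
    then show "(\<lambda>y. restrict y U2) ` {y \<in> marked_order_polytope P prec A lam. restrict y U1 = restrict s U1}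
        = marked_order_polytope P prec (A \<union> U1) (marking_s U1 lam s)"
      by (intro image_restrict_fiber_eq[OF cover order_ext]
          order_polytope_fiber_in_order_polytope[OF cover] order_polytope_glue[OF cover])
  next
    fix s assume "s \<in> chain_order_polytope P prec A lam U1 U2"
    then show "(\<lambda>y. restrict y U2) ` {y \<in> chain_order_polytope P prec A lam U1 U2. restrict y U1 = restrict s U1}
        = marked_chain_polytope P prec (A \<union> U1) (marking_s U1 lam s)"
      by (intro image_restrict_fiber_eq[OF cover chain_ext]
          chain_order_polytope_fiber_in_chain_polytope[OF cover]
          chain_order_polytope_glue[OF assms(1) cover])
  qed
qed

end
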